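(* If a propositional Hilbert-type calculus $\mathbf{C}$ is strictly analytic, then $\mathrm{MC}(\mathbf{C})=\mathrm{Thm}(\mathbf{C})$.
   Context: A propositional language has variables $X_1,X_2,\ldots$ and finitely many connectives with arities. The depth $\mathrm{dp}(A)$ of a formula is $0$ for variables and constants and $\max\{\mathrm{dp}(A_1),\ldots,\mathrm{dp}(A_n)\}+1$ for $A=\Box(A_1,\ldots,A_n)$. $\mathrm{Var}(A)$ is the set of variables in $A$. A substitution $\sigma$ maps variables to formulas; $F\sigma$ is the result of simultaneous replacement. A propositional Hilbert-type calculus $\mathbf{C}$ is given by a finite set of axioms and a finite set of rules (premises $A_1,\ldots,A_n$, conclusion $C$). A derivation is a finite sequence of formulas each of which is a substitution instance of an axiom or is $C\sigma$ for a rule and substitution $\sigma$ with all $A_j\sigma$ occurring earlier; $\mathrm{Thm}(\mathbf{C})$ is the set of derivable formulas. $\mathbf{C}$ is strictly analytic if for every rule with premises $A_1,\ldots,A_n$ and conclusion $C$, each $i$ satisfies $\mathrm{Var}(A_i)\subseteq\mathrm{Var}(C)$ and $\mathrm{dp}(A_i\sigma)\le\mathrm{dp}(C\sigma)$ for every substitution $\sigma$. A finite-valued logic $\mathbf{M}$ has a finite set of truth values, designated values, and a truth function per connective; valuations extend to formulas; a valuation satisfies $F$ if $F$ is designated; tautologies are formulas satisfied by all valuations. $\mathbf{M}$ is a cover for $\mathbf{C}$ if all axioms are tautologies of $\mathbf{M}$ and for every rule every valuation satisfying all premises satisfies the conclusion. $\mathrm{MC}(\mathbf{C})$ is the set of formulas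 that are tautologies of every finite-valued cover of $\mathbf{C}$. *)

theory Defs
  imports Main
begin

text \<open>Connectives are elements of a finite type 'c, each with an arity given by
  ar :: 'c => nat (constants are 0-ary connectives). Variables X_1, X_2, ... are
  represented by Var n, n :: nat.\<close>

datatype 'c form = Var nat | Op 'c "'c form list"

fun wf :: "('c \<Rightarrow> nat) \<Rightarrow> 'c form \<Rightarrow> bool" where
  "wf ar (Var n) = True"
| "wf ar (Op c As) = (length As = ar c \<and> (\<forall>A\<in>set As. wf ar A))"

fun dp :: "'c form \<Rightarrow> nat" where
  "dp (Var n) = 0"
| "dp (Op c As) = (if As = [] then 0 else Suc (Max (set (map dp As))))"

fun vars :: "'c form \<Rightarrow> nat set" where
  "vars (Var n) = {n}"
| "vars (Op c As) = (\<Union>A\<in>set As. vars A)"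

fun subst :: "(nat \<Rightarrow> 'c form) \<Rightarrow> 'c form \<Rightarrow> 'c form" where
  "subst \<sigma> (Var n) = \<sigma> n"
| "subst \<sigma> (Op c As) = Op c (map (subst \<sigma>) As)"

definition is_subst :: "('c \<Rightarrow> nat) \<Rightarrow> (nat \<Rightarrow> 'c form) \<Rightarrow> bool" where
  "is_subst ar \<sigma> \<longleftrightarrow> (\<forall>n. wf ar (\<sigma> n))"

text \<open>A calculus is a pair (axioms, rules); a rule is (premises, conclusion).\<close>

type_synonym 'c calculus = "'c form set \<times> ('c form list \<times> 'c form) set"

definition is_calculus :: "('c \<Rightarrow> nat) \<Rightarrow> 'c calculus \<Rightarrow> bool" where
  "is_calculus ar C \<longleftrightarrow> finite (fst C) \<and> finite (snd C) \<and>
     (\<forall>A\<in>fst C. wf ar A) \<and>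
     (\<forall>(Ps, Q)\<in>snd C. wf ar Q \<and> (\<forall>P\<in>set Ps. wf ar P))"

definition derivation :: "('c \<Rightarrow> nat) \<Rightarrow> 'c calculus \<Rightarrow> 'c form list \<Rightarrow> bool" where
  "derivation ar C ds \<longleftrightarrow>
     (\<forall>i < length ds.
        (\<exists>A \<in> fst C. \<exists>\<sigma>. is_subst ar \<sigma> \<and> ds ! i = subst \<sigma> A) \<or>
        (\<exists>(Ps, Q) \<in> snd C. \<exists>\<sigma>. is_subst ar \<sigma> \<and> ds ! i = subst \<sigma> Q \<and>
            (\<forall>P \<in> set Ps. \<exists>j < i. ds ! j = subst \<sigma> P)))"

definition Thm :: "('c \<Rightarrow> nat) \<Rightarrow> 'c calculus \<Rightarrow> 'c form set" where
  "Thm ar C = {F. \<exists>ds. derivation ar C ds \<and> F \<in> set ds}"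

definition strictly_analytic :: "('c \<Rightarrow> nat) \<Rightarrow> 'c calculus \<Rightarrow> bool" where
  "strictly_analytic ar C \<longleftrightarrow>
     (\<forall>(Ps, Q) \<in> snd C. \<forall>P \<in> set Ps.
        vars P \<subseteq> vars Q \<and>
        (\<forall>\<sigma>. is_subst ar \<sigma> \<longrightarrow> dp (subst \<sigma> P) \<le> dp (subst \<sigma> Q)))"

text \<open>Truth values are represented by a finite set of natural numbers (every finite
  set of truth values is isomorphic to one).\<close>

record 'c fvlogic =
  tvals :: "nat set"
  desig :: "nat set"
  tfun  :: "'c \<Rightarrow> nat list \<Rightarrow> nat"

definition is_fvlogic :: "('c \<Rightarrow> nat) \<Rightarrow> 'c fvlogic \<Rightarrow> bool" where
  "is_fvlogic ar M \<longleftrightarrow> finite (tvals M) \<and> tvals M \<noteq> {} \<and> desig M \<subseteq> tvals M \<and>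
     (\<forall>c xs. length xs = ar c \<and> set xs \<subseteq> tvals M \<longrightarrow> tfun M c xs \<in> tvals M)"

definition valuation :: "'c fvlogic \<Rightarrow> (nat \<Rightarrow> nat) \<Rightarrow> bool" where
  "valuation M v \<longleftrightarrow> (\<forall>n. v n \<in> tvals M)"

fun eval :: "'c fvlogic \<Rightarrow> (nat \<Rightarrow> nat) \<Rightarrow> 'c form \<Rightarrow> nat" where
  "eval M v (Var n) = v n"
| "eval M v (Op c As) = tfun M c (map (eval M v) As)"

definition satisfies :: "'c fvlogic \<Rightarrow> (nat \<Rightarrow> nat) \<Rightarrow> 'c form \<Rightarrow> bool" where
  "satisfies M v F \<longleftrightarrow> eval M v F \<in> desig M"

definition tautology :: "'c fvlogic \<Rightarrow> 'c form \<Rightarrow> bool" where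
  "tautology M F \<longleftrightarrow> (\<forall>v. valuation M v \<longrightarrow> satisfies M v F)"

definition cover :: "('c \<Rightarrow> nat) \<Rightarrow> 'c fvlogic \<Rightarrow> 'c calculus \<Rightarrow> bool" where
  "cover ar M C \<longleftrightarrow> is_fvlogic ar M \<and>
     (\<forall>A \<in> fst C. tautology M A) \<and>
     (\<forall>(Ps, Q) \<in> snd C. \<forall>v. valuation M v \<longrightarrow>
        (\<forall>P \<in> set Ps. satisfies M v P) \<longrightarrow> satisfies M v Q)"

definition MC :: "('c \<Rightarrow> nat) \<Rightarrow> 'c calculus \<Rightarrow> 'c form set" where
  "MC ar C = {F. wf ar F \<and> (\<forall>M. cover ar M C \<longrightarrow> tautology M F)}"

end

theory Submission
  imports Defs "HOL-Library.Countable"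
begin

text \<open>
  Soundness is routine: a cover validates every derivable formula. For completeness let \<open>F\<close>
  be underivable, and let \<open>S\<close> be the set of well-formed formulas with variables among those of
  \<open>F\<close> and depth at most \<open>dp F\<close>; \<open>S\<close> is finite because there are finitely many connectives.
  The partial Lindenbaum matrix has truth values \<open>S\<close> plus one extra value \<open>*\<close>; the designated
  values are \<open>*\<close> and the derivable members of \<open>S\<close>. A connective applied to members of \<open>S\<close>
  yields the compound formula if it lies in \<open>S\<close>, and \<open>*\<close> otherwise. Under the valuation
  sending each variable to itself, \<open>F\<close> evaluates to \<open>F\<close>, which is undesignated. The matrix is
  a cover: an axiom instance in \<open>S\<close> is derivable, and if the conclusion instance of a rule lies
  in \<open>S\<close>, strict analyticity puts all premise instances into \<open>S\<close>, where designated means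
  derivable, so the conclusion instance is derivable as well.
\<close>

lemma finite_vars: "finite (vars A)"
  by (induction A) auto

lemma vars_subst: "vars (subst \<sigma> A) = (\<Union>n\<in>vars A. vars (\<sigma> n))"
  by (induction A) auto

lemma subst_cong: "(\<And>n. n \<in> vars A \<Longrightarrow> \<sigma> n = \<tau> n) \<Longrightarrow> subst \<sigma> A = subst \<tau> A"
  by (induction A) auto

lemma subst_Var [simp]: "subst Var A = A"
  by (induction A) (auto intro: map_idI)

lemma dp_Op: "A \<in> set As \<Longrightarrow> dp A < dp (Op c As)"
  by (auto simp: less_Suc_eq_le intro: Max_ge)

lemma wf_subst: "wf ar A \<Longrightarrow> is_subst ar \<sigma> \<Longrightarrow> wf ar (subst \<sigma> A)"
  by (induction A) (auto simp: is_subst_def)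

definition justified :: "('c \<Rightarrow> nat) \<Rightarrow> 'c calculus \<Rightarrow> 'c form set \<Rightarrow> 'c form \<Rightarrow> bool" where
  "justified ar C \<Gamma> B \<longleftrightarrow>
     (\<exists>A \<in> fst C. \<exists>\<sigma>. is_subst ar \<sigma> \<and> B = subst \<sigma> A) \<or>
     (\<exists>(Ps, Q) \<in> snd C. \<exists>\<sigma>. is_subst ar \<sigma> \<and> B = subst \<sigma> Q \<and> (\<forall>P \<in> set Ps. subst \<sigma> P \<in> \<Gamma>))"

lemma justified_mono: "justified ar C \<Gamma> B \<Longrightarrow> \<Gamma> \<subseteq> \<Delta> \<Longrightarrow> justified ar C \<Delta> B"
  unfolding justified_def by blast

lemma justified_axiomI: "A \<in> fst C \<Longrightarrow> is_subst ar \<sigma> \<Longrightarrow> justified ar C \<Gamma> (subst \<sigma> A)"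
  unfolding justified_def by blast

lemma justified_ruleI:
  "(Ps, Q) \<in> snd C \<Longrightarrow> is_subst ar \<sigma> \<Longrightarrow> subst \<sigma> ` set Ps \<subseteq> \<Gamma> \<Longrightarrow>
    justified ar C \<Gamma> (subst \<sigma> Q)"
  unfolding justified_def by blast

lemma derivation_iff_justified:
  "derivation ar C ds \<longleftrightarrow> (\<forall>i < length ds. justified ar C (set (take i ds)) (ds ! i))"
proof -
  have "(\<exists>j<i. ds ! j = B) \<longleftrightarrow> B \<in> set (take i ds)" if "i < length ds" for i B
    using that by (auto simp: in_set_conv_nth)
  then show ?thesis
    unfolding derivation_def justified_def by (auto 0 4)
qed

lemma derivation_Nil [simp]: "derivation ar C []"
  by (simp add: derivation_def)

lemma derivation_snoc:
  "derivation ar C (ds @ [B]) \<longleftrightarrow> derivation ar C ds \<and> justified ar C (set ds) B"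
  by (auto simp: derivation_iff_justified nth_append less_Suc_eq)

lemma derivation_append:
  "derivation ar C ds \<Longrightarrow> derivation ar C es \<Longrightarrow> derivation ar C (ds @ es)"
proof (induction es rule: rev_induct)
  case (snoc B es)
  then show ?case
    by (auto simp: derivation_snoc simp flip: append_assoc elim: justified_mono)
qed simp

inductive_set derivable :: "('c \<Rightarrow> nat) \<Rightarrow> 'c calculus \<Rightarrow> 'c form set" for ar C where
  axiom: "A \<in> fst C \<Longrightarrow> is_subst ar \<sigma> \<Longrightarrow> subst \<sigma> A \<in> derivable ar C"
| rule: "(Ps, Q) \<in> snd C \<Longrightarrow> is_subst ar \<sigma> \<Longrightarrow> (\<And>P. P \<in> set Ps \<Longrightarrow> subst \<sigma> P \<in> derivable ar C)
    \<Longrightarrow> subst \<sigma> Q \<in> derivable ar C"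

lemma justified_derivable:
  "justified ar C \<Gamma> B \<Longrightarrow> \<Gamma> \<subseteq> derivable ar C \<Longrightarrow> B \<in> derivable ar C"
  unfolding justified_def by (auto intro: derivable.intros)

lemma derivation_derivable: "derivation ar C ds \<Longrightarrow> set ds \<subseteq> derivable ar C"
  by (induction ds rule: rev_induct) (auto simp: derivation_snoc intro: justified_derivable)

lemma ex_derivation_containing:
  assumes "finite \<Gamma>" "\<Gamma> \<subseteq> Thm ar C"
  shows "\<exists>ds. derivation ar C ds \<and> \<Gamma> \<subseteq> set ds"
  using assms
proof (induction \<Gamma> rule: finite_induct)
  case (insert B \<Gamma>)
  then obtain ds es where "derivation ar C ds" "\<Gamma> \<subseteq> set ds" "derivation ar C es" "B \<in> set es"
    by (auto simp: Thm_def)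
  then show ?case by (intro exI[of _ "ds @ es"]) (auto intro: derivation_append)
qed (use derivation_Nil in blast)

lemma derivable_subset_Thm: "derivable ar C \<subseteq> Thm ar C"
proof
  fix B assume "B \<in> derivable ar C"
  then show "B \<in> Thm ar C"
  proof induction
    case (axiom A \<sigma>)
    then have "derivation ar C [subst \<sigma> A]"
      using derivation_snoc[of ar C "[]"] justified_axiomI[of A C ar \<sigma> "{}"] by simp
    then show ?case by (force simp: Thm_def)
  next
    case (rule Ps Q \<sigma>)
    obtain ds where "derivation ar C ds" "subst \<sigma> ` set Ps \<subseteq> set ds"
      using ex_derivation_containing[of "subst \<sigma> ` set Ps" ar C] rule.IH by blast
    then have "derivation ar C (ds @ [subst \<sigma> Q])"
      using rule.hyps by (simp add: derivation_snoc justified_ruleI)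
    then show ?case by (force simp: Thm_def)
  qed
qed

lemma Thm_eq_derivable: "Thm ar C = derivable ar C"
  using derivable_subset_Thm derivation_derivable by (fastforce simp: Thm_def)

section \<open>Soundness\<close>

lemma wf_derivable:
  assumes "is_calculus ar C"
  shows "A \<in> derivable ar C \<Longrightarrow> wf ar A"
  by (induction rule: derivable.induct) (use assms in \<open>auto simp: is_calculus_def intro: wf_subst\<close>)

lemma eval_subst: "eval M v (subst \<sigma> A) = eval M (eval M v \<circ> \<sigma>) A"
  by (induction A) (auto cong: map_cong)

lemma eval_in_tvals:
  assumes "is_fvlogic ar M" "valuation M v"
  shows "wf ar A \<Longrightarrow> eval M v A \<in> tvals M"
proof (induction A)
  case (Op c As)
  then have "length (map (eval M v) As) = ar c" "set (map (eval M v) As) \<subseteq> tvals M" by auto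
  then show ?case using assms(1) by (simp add: is_fvlogic_def)
qed (use assms(2) in \<open>simp add: valuation_def\<close>)

lemma valuation_eval_subst:
  "is_fvlogic ar M \<Longrightarrow> valuation M v \<Longrightarrow> is_subst ar \<sigma> \<Longrightarrow> valuation M (eval M v \<circ> \<sigma>)"
  by (simp add: valuation_def is_subst_def eval_in_tvals)

lemma tautology_subst:
  "is_fvlogic ar M \<Longrightarrow> is_subst ar \<sigma> \<Longrightarrow> tautology M A \<Longrightarrow> tautology M (subst \<sigma> A)"
  by (simp add: tautology_def satisfies_def eval_subst valuation_eval_subst)

lemma tautology_derivable:
  assumes "cover ar M C"
  shows "A \<in> derivable ar C \<Longrightarrow> tautology M A"
proof (induction rule: derivable.induct)
  case (axiom A \<sigma>)
  then show ?case using assms by (auto simp: cover_def intro: tautology_subst)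
next
  case (rule Ps Q \<sigma>)
  have M: "is_fvlogic ar M" using assms by (simp add: cover_def)
  show ?case unfolding tautology_def
  proof (intro allI impI)
    fix v assume v: "valuation M v"
    have "satisfies M (eval M v \<circ> \<sigma>) P" if "P \<in> set Ps" for P
      using rule.IH[OF that] v by (simp add: tautology_def satisfies_def eval_subst)
    then have "satisfies M (eval M v \<circ> \<sigma>) Q"
      using assms rule.hyps valuation_eval_subst[OF M v rule.hyps(2)]
      by (fastforce simp: cover_def)
    then show "satisfies M v (subst \<sigma> Q)" by (simp add: satisfies_def eval_subst)
  qed
qed

lemma Thm_subset_MC: "is_calculus ar C \<Longrightarrow> Thm ar C \<subseteq> MC ar C"
  by (auto simp: Thm_eq_derivable MC_def wf_derivable tautology_derivable)

section \<open>The partial Lindenbaum matrix\<close>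

definition forms_within :: "('c \<Rightarrow> nat) \<Rightarrow> nat set \<Rightarrow> nat \<Rightarrow> 'c form set" where
  "forms_within ar V d = {A. wf ar A \<and> vars A \<subseteq> V \<and> dp A \<le> d}"

lemma Var_in_forms_within: "n \<in> V \<Longrightarrow> Var n \<in> forms_within ar V d"
  by (simp add: forms_within_def)

lemma forms_within_Op_arg:
  "Op c As \<in> forms_within ar V d \<Longrightarrow> A \<in> set As \<Longrightarrow> A \<in> forms_within ar V d"
  using dp_Op[of A As c] by (auto simp: forms_within_def)

lemma finite_forms_within:
  fixes ar :: "'c::finite \<Rightarrow> nat"
  assumes "finite V"
  shows "finite (forms_within ar V d)"
proof (induction d)
  case 0
  have "forms_within ar V 0 \<subseteq> Var ` V \<union> range (\<lambda>c. Op c [])"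
  proof
    fix A assume "A \<in> forms_within ar V 0"
    then show "A \<in> Var ` V \<union> range (\<lambda>c. Op c [])"
      by (cases A) (auto simp: forms_within_def split: if_splits)
  qed
  then show ?case using assms by (meson finite_UnI finite_imageI finite_subset finite_UNIV)
next
  case (Suc d)
  have "forms_within ar V (Suc d) \<subseteq>
      Var ` V \<union> (\<Union>c. Op c ` {As. set As \<subseteq> forms_within ar V d \<and> length As = ar c})"
    (is "_ \<subseteq> ?R")
  proof
    fix A assume A: "A \<in> forms_within ar V (Suc d)"
    show "A \<in> ?R"
    proof (cases A)
      case (Var n)
      then show ?thesis using A by (simp add: forms_within_def)
    next
      case (Op c As)
      have "B \<in> forms_within ar V d" if "B \<in> set As" for B
        using A dp_Op[OF that, of c] that by (auto simp: Op forms_within_def)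
      then have "As \<in> {As. set As \<subseteq> forms_within ar V d \<and> length As = ar c}"
        using A by (auto simp: Op forms_within_def)
      then show ?thesis unfolding Op by blast
    qed
  qed
  moreover have "finite {As. set As \<subseteq> forms_within ar V d \<and> length As = ar c}" for c
    using Suc.IH by (rule finite_lists_length_eq)
  ultimately show ?case
    using assms by (meson finite_UN_I finite_UnI finite_imageI finite_subset finite_UNIV)
qed

lemma strictly_analyticD:
  assumes "strictly_analytic ar C" "(Ps, Q) \<in> snd C" "P \<in> set Ps"
  shows "vars P \<subseteq> vars Q" and "is_subst ar \<sigma> \<Longrightarrow> dp (subst \<sigma> P) \<le> dp (subst \<sigma> Q)"
  using bspec[OF assms(1)[unfolded strictly_analytic_def] assms(2)] assms(3) by auto

lemma forms_within_premise_instance: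
  assumes "is_calculus ar C" "strictly_analytic ar C" "(Ps, Q) \<in> snd C" "P \<in> set Ps"
    and "is_subst ar \<sigma>" "subst \<sigma> Q \<in> forms_within ar V d"
  shows "subst \<sigma> P \<in> forms_within ar V d"
proof -
  have "wf ar P" using assms(1,3,4) by (auto simp: is_calculus_def)
  moreover have "vars P \<subseteq> vars Q" "dp (subst \<sigma> P) \<le> dp (subst \<sigma> Q)"
    using strictly_analyticD[OF assms(2-4)] assms(5) by auto
  ultimately show ?thesis
    using assms(5,6) by (auto simp: forms_within_def vars_subst intro: wf_subst)
qed

instance form :: (countable) countable
  by countable_datatype

definition encode_form :: "'c::countable form \<Rightarrow> nat" where
  "encode_form A = Suc (to_nat A)"

text \<open>\<open>decode_form 0\<close> is junk; it is chosen well-formed so that decoding any valuation of the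
  Lindenbaum matrix yields a substitution.\<close>

definition decode_form :: "nat \<Rightarrow> 'c::countable form" where
  "decode_form k = (case k of 0 \<Rightarrow> Var 0 | Suc m \<Rightarrow> from_nat m)"

lemma decode_encode_form [simp]: "decode_form (encode_form A) = A"
  by (simp add: encode_form_def decode_form_def)

lemma decode_form_0 [simp]: "decode_form 0 = Var 0"
  by (simp add: decode_form_def)

lemma encode_form_neq_0 [simp]: "encode_form A \<noteq> 0"
  by (simp add: encode_form_def)

lemma encode_form_eq_iff [simp]: "encode_form A = encode_form B \<longleftrightarrow> A = B"
  by (metis decode_encode_form)

text \<open>The truth value \<open>0\<close> is the extra value \<open>*\<close>, and \<open>encode_form A\<close> represents the
  formula \<open>A \<in> S\<close>.\<close>

definition lindenbaum :: "('c::countable \<Rightarrow> nat) \<Rightarrow> 'c calculus \<Rightarrow> nat set \<Rightarrow> nat \<Rightarrow> 'c fvlogic" where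
  "lindenbaum ar C V d =
    \<lparr>tvals = insert 0 (encode_form ` forms_within ar V d),
     desig = insert 0 (encode_form ` (forms_within ar V d \<inter> Thm ar C)),
     tfun = (\<lambda>c xs. if 0 \<notin> set xs \<and> Op c (map decode_form xs) \<in> forms_within ar V d
                    then encode_form (Op c (map decode_form xs)) else 0)\<rparr>"

lemma tvals_lindenbaum: "tvals (lindenbaum ar C V d) = insert 0 (encode_form ` forms_within ar V d)"
  and desig_lindenbaum:
    "desig (lindenbaum ar C V d) = insert 0 (encode_form ` (forms_within ar V d \<inter> Thm ar C))"
  and tfun_lindenbaum: "tfun (lindenbaum ar C V d) c xs =
    (if 0 \<notin> set xs \<and> Op c (map decode_form xs) \<in> forms_within ar V d
     then encode_form (Op c (map decode_form xs)) else 0)"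
  by (simp_all add: lindenbaum_def)

lemma valuation_lindenbaum:
  "valuation (lindenbaum ar C V d) v \<longleftrightarrow> (\<forall>n. v n = 0 \<or> v n \<in> encode_form ` forms_within ar V d)"
  by (simp add: valuation_def tvals_lindenbaum)

lemma eval_lindenbaum:
  assumes "valuation (lindenbaum ar C V d) v"
  shows "eval (lindenbaum ar C V d) v A =
    (if 0 \<notin> v ` vars A \<and> subst (\<lambda>n. decode_form (v n)) A \<in> forms_within ar V d
     then encode_form (subst (\<lambda>n. decode_form (v n)) A) else 0)"
proof (induction A)
  case (Var n)
  have "v n = 0 \<or> v n \<in> encode_form ` forms_within ar V d"
    using assms by (simp add: valuation_lindenbaum)
  then show ?case by auto
next
  case (Op c As)
  let ?M = "lindenbaum ar C V d" and ?\<sigma> = "\<lambda>n. decode_form (v n)"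
  let ?defined = "\<lambda>A. 0 \<notin> v ` vars A \<and> subst ?\<sigma> A \<in> forms_within ar V d"
  show ?case
  proof (cases "\<forall>A \<in> set As. ?defined A")
    case True
    then have "map (eval ?M v) As = map (encode_form \<circ> subst ?\<sigma>) As"
      using Op.IH by simp
    then have decode_args: "map (decode_form \<circ> eval ?M v) As = map (subst ?\<sigma>) As"
      and "0 \<notin> eval ?M v ` set As"
      by auto
    moreover have "0 \<notin> v ` vars (Op c As)" using True by auto
    ultimately show ?thesis by (simp add: tfun_lindenbaum decode_args)
  next
    case False
    then obtain A where "A \<in> set As" "\<not> ?defined A" by blast
    then have "0 \<in> set (map (eval ?M v) As)" and "\<not> ?defined (Op c As)"
      using Op.IH forms_within_Op_arg by force+
    then show ?thesis by (simp add: tfun_lindenbaum)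
  qed
qed

lemma satisfies_lindenbaum:
  assumes "valuation (lindenbaum ar C V d) v"
  shows "satisfies (lindenbaum ar C V d) v A \<longleftrightarrow>
    (0 \<notin> v ` vars A \<and> subst (\<lambda>n. decode_form (v n)) A \<in> forms_within ar V d
     \<longrightarrow> subst (\<lambda>n. decode_form (v n)) A \<in> Thm ar C)"
  by (auto simp: satisfies_def eval_lindenbaum[OF assms] desig_lindenbaum)

lemma is_subst_decode_valuation:
  assumes "valuation (lindenbaum ar C V d) v"
  shows "is_subst ar (\<lambda>n. decode_form (v n))"
  unfolding is_subst_def
proof
  fix n
  have "v n = 0 \<or> v n \<in> encode_form ` forms_within ar V d"
    using assms by (simp add: valuation_lindenbaum)
  then show "wf ar (decode_form (v n))"
    by (auto simp: forms_within_def)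
qed

lemma is_fvlogic_lindenbaum:
  fixes ar :: "'c::finite \<Rightarrow> nat"
  assumes "finite V"
  shows "is_fvlogic ar (lindenbaum ar C V d)"
  using finite_forms_within[OF assms]
  by (auto simp: is_fvlogic_def tvals_lindenbaum desig_lindenbaum tfun_lindenbaum)

lemma cover_lindenbaum:
  fixes ar :: "'c::finite \<Rightarrow> nat"
  assumes calculus: "is_calculus ar C" and analytic: "strictly_analytic ar C" and "finite V"
  shows "cover ar (lindenbaum ar C V d) C"
proof -
  let ?M = "lindenbaum ar C V d"
  have axioms: "tautology ?M A" if "A \<in> fst C" for A
    using that by (auto simp: tautology_def satisfies_lindenbaum Thm_eq_derivable
        intro: derivable.axiom is_subst_decode_valuation)
  have rules: "satisfies ?M v Q"
    if rule: "(Ps, Q) \<in> snd C" and v: "valuation ?M v" and prems_sat: "\<forall>P\<in>set Ps. satisfies ?M v P"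
    for Ps Q v
    unfolding satisfies_lindenbaum[OF v]
  proof
    let ?\<sigma> = "\<lambda>n. decode_form (v n)"
    assume Q: "0 \<notin> v ` vars Q \<and> subst ?\<sigma> Q \<in> forms_within ar V d"
    have \<sigma>: "is_subst ar ?\<sigma>" using v by (rule is_subst_decode_valuation)
    have premises_derivable: "subst ?\<sigma> P \<in> derivable ar C" if "P \<in> set Ps" for P
    proof -
      have "vars P \<subseteq> vars Q"
        using analytic rule that by (rule strictly_analyticD)
      moreover have "subst ?\<sigma> P \<in> forms_within ar V d"
        using forms_within_premise_instance[OF calculus analytic rule that \<sigma>] Q by blast
      ultimately show ?thesis
        using prems_sat that Q by (auto simp: satisfies_lindenbaum[OF v] Thm_eq_derivable)
    qed
    show "subst ?\<sigma> Q \<in> Thm ar C"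
      unfolding Thm_eq_derivable by (rule derivable.rule[OF rule \<sigma> premises_derivable])
  qed
  show ?thesis
    unfolding cover_def using is_fvlogic_lindenbaum[OF \<open>finite V\<close>] axioms rules by fast
qed

lemma lindenbaum_refutes:
  fixes F :: "'c::countable form"
  assumes "wf ar F" "F \<notin> Thm ar C"
  shows "\<not> tautology (lindenbaum ar C (vars F) (dp F)) F"
proof
  define v where "v n = (if n \<in> vars F then encode_form (Var n :: 'c form) else 0)" for n
  have "encode_form (Var n :: 'c form) \<in> encode_form ` forms_within ar (vars F) (dp F)"
    if "n \<in> vars F" for n
    using that by (intro imageI Var_in_forms_within)
  then have "valuation (lindenbaum ar C (vars F) (dp F)) v"
    by (simp add: v_def valuation_lindenbaum)
  moreover have "subst (\<lambda>n. decode_form (v n)) F = F"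
    by (subst subst_Var[symmetric], rule subst_cong) (simp add: v_def)
  moreover have "F \<in> forms_within ar (vars F) (dp F)"
    using assms(1) by (simp add: forms_within_def)
  moreover assume "tautology (lindenbaum ar C (vars F) (dp F)) F"
  ultimately show False
    using assms(2) by (auto simp: tautology_def satisfies_lindenbaum v_def)
qed

lemma MC_subset_Thm:
  fixes ar :: "'c::finite \<Rightarrow> nat"
  assumes "is_calculus ar C" "strictly_analytic ar C"
  shows "MC ar C \<subseteq> Thm ar C"
proof
  fix F assume "F \<in> MC ar C"
  then have "wf ar F" and "tautology (lindenbaum ar C (vars F) (dp F)) F"
    using cover_lindenbaum[OF assms finite_vars] by (auto simp: MC_def)
  then show "F \<in> Thm ar C" using lindenbaum_refutes by blast
qed

theorem corollary4:
  fixes ar :: "'c::finite \<Rightarrow> nat" and C :: "'c calculus"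
  assumes "is_calculus ar C"
    and "strictly_analytic ar C"
  shows "MC ar C = Thm ar C"
  using MC_subset_Thm[OF assms] Thm_subset_MC[OF assms(1)] by (rule equalityI)

end
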